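(* Let $m$ be a positive integer and let $n,x,y$ be rational integers satisfying $n\ge 3$, $\max\{|x|,|y|\}\ge 2$ and $\Phi_n(x,y)=m$. Then $$\varphi(n)\le \frac{2}{\log 3}\log m \quad\text{and}\quad \max\{|x|,|y|\}\le \frac{2}{\sqrt 3}\, m^{1/\varphi(n)}.$$ In particular, there is no such solution when $m\in\{1,2\}$.
   Context: For $n\ge 1$, $\phi_n(X)\in\mathbb Z[X]$ denotes the $n$-th cyclotomic polynomial (degree $\varphi(n)$, $\varphi$ Euler's totient function), and the cyclotomic binary form is $\Phi_n(X,Y)=Y^{\varphi(n)}\phi_n(X/Y)$. *)

theory Defs
  imports "HOL-Analysis.Analysis" "HOL-Computational_Algebra.Polynomial" "HOL-Number_Theory.Totient"
begin

definition cyclotomic_poly :: "nat \<Rightarrow> complex poly" where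
  "cyclotomic_poly n =
     (\<Prod>k\<in>{k\<in>{1..n}. coprime k n}. [:- cis (2 * pi * real k / real n), 1:])"

text \<open>The cyclotomic binary form Phi_n(X,Y) = Y^phi(n) phi_n(X/Y), i.e. the
  homogenisation of the cyclotomic polynomial (degree phi(n)), evaluated at (x,y).\<close>
definition cyclotomic_form :: "nat \<Rightarrow> complex \<Rightarrow> complex \<Rightarrow> complex" where
  "cyclotomic_form n x y =
     (\<Sum>i\<le>totient n. coeff (cyclotomic_poly n) i * x ^ i * y ^ (totient n - i))"

end

theory Submission
  imports Defs
begin

text \<open>Over \<open>\<complex>\<close>, \<open>\<Phi>\<^sub>n(x, y)\<close> is the product of \<open>x - \<zeta> y\<close> over the primitive \<open>n\<close>-th
  roots of unity \<open>\<zeta>\<close>. Let \<open>s = \<plusminus>1\<close> be the sign of \<open>x y\<close>. Since \<open>|\<zeta>| = 1\<close>,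
  \<open>|x - \<zeta> y|\<^sup>2 = (x - s y)\<^sup>2 + |x y| |s - \<zeta>|\<^sup>2\<close>, and \<open>\<Prod> |s - \<zeta>| = |\<phi>\<^sub>n(s)| \<ge> 1\<close>
  because \<open>\<phi>\<^sub>n\<close> has integer coefficients and \<open>s\<close> is not a root of it for \<open>n \<ge> 3\<close>.
  Weighted AM-GM then gives
  \<open>m\<^sup>2 \<ge> (x\<^sup>2 - |x y| + y\<^sup>2)\<^bsup>\<phi>(n)\<^esup> \<ge> (3/4 max(|x|, |y|)\<^sup>2)\<^bsup>\<phi>(n)\<^esup>\<close>,
  and both bounds follow; as \<open>\<phi>(n) \<ge> 2\<close> this also forces \<open>m \<ge> 3\<close>.\<close>


lemma cis_2pi_div_eq_1_iff:
  assumes "n > 0"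
  shows "cis (2 * pi * real j / real n) = 1 \<longleftrightarrow> n dvd j"
proof -
  have "cis (2 * pi * real j / real n) = exp (2 * of_real pi * \<i> * of_nat j / of_nat n)"
    by (simp add: cis_conv_exp field_simps)
  then show ?thesis using complex_root_unity_eq_1[of n j] assms by simp
qed

lemma cis_2pi_div_power:
  "cis (2 * pi * real j / real n) ^ d = cis (2 * pi * real (j * d) / real n)"
proof -
  have "real d * (2 * pi * real j / real n) = 2 * pi * real (j * d) / real n"
    by (simp add: mult_ac)
  then show ?thesis by (simp only: Complex.DeMoivre)
qed

definition primitive_roots_unity :: "nat \<Rightarrow> complex set" where
  "primitive_roots_unity n = {z. z ^ n = 1 \<and> (\<forall>d. 0 < d \<and> d < n \<longrightarrow> z ^ d \<noteq> 1)}"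

lemma primitive_roots_unity_power_eq_1:
  "z \<in> primitive_roots_unity n \<Longrightarrow> z ^ n = 1"
  by (simp add: primitive_roots_unity_def)

lemma one_notin_primitive_roots_unity: "n \<ge> 2 \<Longrightarrow> 1 \<notin> primitive_roots_unity n"
  unfolding primitive_roots_unity_def by (auto intro!: exI[of _ 1])

lemma minus_one_notin_primitive_roots_unity: "n \<ge> 3 \<Longrightarrow> -1 \<notin> primitive_roots_unity n"
  unfolding primitive_roots_unity_def by (auto intro!: exI[of _ 2])

lemma finite_primitive_roots_unity: "n > 0 \<Longrightarrow> finite (primitive_roots_unity n)"
  by (rule finite_subset[OF _ finite_roots_unity[of n]]) (auto simp: primitive_roots_unity_def)

lemma norm_primitive_root_unity:
  assumes "n > 0" "z \<in> primitive_roots_unity n"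
  shows "norm z = 1"
proof -
  have "norm z ^ n = 1 ^ n"
    using assms(2) by (simp add: primitive_roots_unity_power_eq_1 flip: norm_power)
  then show ?thesis by (rule power_eq_imp_eq_base) (use assms(1) in auto)
qed

lemma disjoint_primitive_roots_unity:
  assumes "d \<noteq> d'" "d > 0" "d' > 0"
  shows "primitive_roots_unity d \<inter> primitive_roots_unity d' = {}"
  using assms unfolding primitive_roots_unity_def
  by (cases "d < d'") (auto simp: disjoint_iff dest: linorder_neqE_nat)

lemma inj_on_cis_2pi_div:
  assumes "n > 0"
  shows "inj_on (\<lambda>k. cis (2 * pi * real k / real n)) {1..n}"
proof (rule inj_onI)
  fix k k' assume k: "k \<in> {1..n}" "k' \<in> {1..n}"
    and "cis (2 * pi * real k / real n) = cis (2 * pi * real k' / real n)"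
  then have "exp (2 * of_real pi * \<i> * of_nat k / of_nat n) = exp (2 * of_real pi * \<i> * of_nat k' / of_nat n)"
    by (simp add: cis_conv_exp field_simps)
  then have "k mod n = k' mod n" using complex_root_unity_eq[of n k k'] assms by simp
  with k show "k = k'"
    by (metis atLeastAtMost_iff le_antisym mod_less mod_self nat_less_le not_one_le_zero)
qed

lemma cis_2pi_div_in_primitive_roots_unity:
  assumes "n > 0" "coprime k n"
  shows "cis (2 * pi * real k / real n) \<in> primitive_roots_unity n"
proof -
  have "cis (2 * pi * real k / real n) ^ d = 1 \<longleftrightarrow> n dvd d" for d
    unfolding cis_2pi_div_power cis_2pi_div_eq_1_iff[OF assms(1)]
    using assms(2) by (simp add: coprime_commute coprime_dvd_mult_right_iff)
  then show ?thesis unfolding primitive_roots_unity_def by (auto dest: nat_dvd_not_less)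
qed

lemma primitive_roots_unity_subset_image_cis:
  assumes "n > 0"
  shows "primitive_roots_unity n \<subseteq> (\<lambda>k. cis (2 * pi * real k / real n)) ` {k\<in>{1..n}. coprime k n}"
proof
  fix z assume z: "z \<in> primitive_roots_unity n"
  have "z \<in> {z. z ^ n = 1}" using z by (simp add: primitive_roots_unity_power_eq_1)
  then obtain i where "i < n" and zi: "z = cis (2 * pi * real i / real n)"
    using Complex.bij_betw_roots_unity[OF assms] unfolding bij_betw_def by auto
  define j where "j = (if i = 0 then n else i)"
  have j: "j \<in> {1..n}" using \<open>i < n\<close> assms by (auto simp: j_def)
  have zj: "z = cis (2 * pi * real j / real n)"
    using zi assms by (simp add: j_def cis_2pi_div_eq_1_iff)
  have "coprime j n"
  proof (rule ccontr)
    assume "\<not> coprime j n"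
    then have g: "gcd j n > 1" using assms by (simp add: coprime_iff_gcd_eq_1 nat_neq_iff)
    define d where "d = n div gcd j n"
    have n_eq: "n = gcd j n * d" by (simp add: d_def)
    have "0 < d" using n_eq assms by (cases d) auto
    have "d < n" using mult_less_mono1[OF g \<open>0 < d\<close>] n_eq by simp
    have "n dvd j * d" using n_eq by (metis gcd_dvd1 mult_dvd_mono dvd_refl)
    then have "z ^ d = 1" unfolding zj cis_2pi_div_power cis_2pi_div_eq_1_iff[OF assms] .
    with z \<open>0 < d\<close> \<open>d < n\<close> show False by (auto simp: primitive_roots_unity_def)
  qed
  with j zj show "z \<in> (\<lambda>k. cis (2 * pi * real k / real n)) ` {k\<in>{1..n}. coprime k n}" by auto
qed

lemma bij_betw_cis_primitive_roots_unity:
  assumes "n > 0"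
  shows "bij_betw (\<lambda>k. cis (2 * pi * real k / real n)) {k\<in>{1..n}. coprime k n} (primitive_roots_unity n)"
  unfolding bij_betw_def
proof
  show "inj_on (\<lambda>k. cis (2 * pi * real k / real n)) {k\<in>{1..n}. coprime k n}"
    using inj_on_cis_2pi_div[OF assms] by (rule inj_on_subset) auto
  show "(\<lambda>k. cis (2 * pi * real k / real n)) ` {k\<in>{1..n}. coprime k n} = primitive_roots_unity n"
    using primitive_roots_unity_subset_image_cis[OF assms] cis_2pi_div_in_primitive_roots_unity[OF assms]
    by auto
qed

lemma totatives_eq_coprime_atLeastAtMost: "totatives n = {k\<in>{1..n}. coprime k n}"
  by (auto simp: totatives_def)

lemma card_primitive_roots_unity: "n > 0 \<Longrightarrow> card (primitive_roots_unity n) = totient n"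
  using bij_betw_same_card[OF bij_betw_cis_primitive_roots_unity[of n]]
  by (simp add: totient_def totatives_eq_coprime_atLeastAtMost)

lemma roots_unity_eq_UN_primitive_roots_unity:
  assumes "n > 0"
  shows "{z::complex. z ^ n = 1} = (\<Union>d\<in>{d. d dvd n}. primitive_roots_unity d)"
proof (intro equalityI subsetI)
  fix z :: complex assume "z \<in> {z. z ^ n = 1}"
  then have zn: "z ^ n = 1" by simp
  define d where "d = (LEAST d. 0 < d \<and> z ^ d = 1)"
  have d: "0 < d" "z ^ d = 1"
    using LeastI[of "\<lambda>d. 0 < d \<and> z ^ d = 1" n] zn assms by (simp_all add: d_def)
  have d_min: "z ^ e \<noteq> 1" if "0 < e" "e < d" for e
    using not_less_Least[of e "\<lambda>d. 0 < d \<and> z ^ d = 1"] that by (simp add: d_def)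
  have "z ^ (n mod d) = 1"
    using zn d(2) by (metis mult_div_mod_eq power_add power_mult power_one mult_1)
  then have "d dvd n" using d_min[of "n mod d"] d(1) by (meson dvd_eq_mod_eq_0 mod_less_divisor neq0_conv)
  moreover have "z \<in> primitive_roots_unity d" using d d_min by (simp add: primitive_roots_unity_def)
  ultimately show "z \<in> (\<Union>d\<in>{d. d dvd n}. primitive_roots_unity d)" by blast
next
  fix z assume "z \<in> (\<Union>d\<in>{d. d dvd n}. primitive_roots_unity d)"
  then obtain d k where "n = d * k" "z ^ d = 1" by (auto simp: primitive_roots_unity_def)
  then show "z \<in> {z. z ^ n = 1}" by (simp add: power_mult)
qed

lemma cyclotomic_poly_eq_prod_primitive_roots_unity:
  "n > 0 \<Longrightarrow> cyclotomic_poly n = (\<Prod>z\<in>primitive_roots_unity n. [:-z, 1:])"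
  unfolding cyclotomic_poly_def
  using prod.reindex_bij_betw[OF bij_betw_cis_primitive_roots_unity, of n "\<lambda>z. [:-z, 1:]"]
  by simp

lemma lead_coeff_cyclotomic_poly: "lead_coeff (cyclotomic_poly n) = 1"
  unfolding cyclotomic_poly_def lead_coeff_prod by simp

lemma degree_cyclotomic_poly: "degree (cyclotomic_poly n) = totient n"
  unfolding cyclotomic_poly_def
  by (subst degree_prod_eq_sum_degree) (auto simp: totient_def totatives_eq_coprime_atLeastAtMost)

lemma poly_cyclotomic_poly:
  "n > 0 \<Longrightarrow> poly (cyclotomic_poly n) c = (\<Prod>z\<in>primitive_roots_unity n. c - z)"
  by (simp add: cyclotomic_poly_eq_prod_primitive_roots_unity poly_prod)

lemma monom_minus_1_eq_prod_roots_unity: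
  assumes "n > 0"
  shows "monom 1 n - 1 = (\<Prod>z\<in>{z::complex. z ^ n = 1}. [:-z, 1:])"
proof (rule poly_eqI_degree_lead_coeff[where n = n and A = "{z::complex. z ^ n = 1}"])
  have fin: "finite {z::complex. z ^ n = 1}" using assms by (intro finite_roots_unity) simp
  have card: "card {z::complex. z ^ n = 1} = n" using card_roots_unity_eq[OF assms] .
  have deg: "degree (\<Prod>z\<in>{z::complex. z ^ n = 1}. [:-z, 1:]) = n"
    by (subst degree_prod_eq_sum_degree) (auto simp: card)
  then show "coeff (monom 1 n - 1) n = coeff (\<Prod>z\<in>{z::complex. z ^ n = 1}. [:-z, 1:]) n"
    using assms lead_coeff_prod[of "\<lambda>z. [:-z, 1:]" "{z::complex. z ^ n = 1}"] by simp
  show "n \<le> card {z::complex. z ^ n = 1}" using card by simp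
  show "degree (monom 1 n - 1 :: complex poly) \<le> n"
    by (rule order.trans[OF degree_diff_le_max]) (simp add: degree_monom_le)
  show "degree (\<Prod>z\<in>{z::complex. z ^ n = 1}. [:-z, 1:]) \<le> n" using deg by simp
  fix z :: complex assume z: "z \<in> {z. z ^ n = 1}"
  then have "poly (\<Prod>w\<in>{z::complex. z ^ n = 1}. [:-w, 1:]) z = 0"
    using fin by (auto simp: poly_prod intro: prod_zero)
  then show "poly (monom 1 n - 1) z = poly (\<Prod>z\<in>{z::complex. z ^ n = 1}. [:-z, 1:]) z"
    using z by (simp add: poly_monom)
qed

lemma monom_minus_1_eq_prod_cyclotomic_poly:
  assumes "n > 0"
  shows "monom 1 n - 1 = (\<Prod>d\<in>{d. d dvd n}. cyclotomic_poly d)"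
proof -
  have divisors_pos: "d > 0" if "d \<in> {d. d dvd n}" for d
    using that assms by (auto intro: dvd_pos_nat)
  have "monom 1 n - 1 = (\<Prod>z\<in>(\<Union>d\<in>{d. d dvd n}. primitive_roots_unity d). [:-z, 1:])"
    using monom_minus_1_eq_prod_roots_unity[OF assms] roots_unity_eq_UN_primitive_roots_unity[OF assms]
    by simp
  also have "\<dots> = (\<Prod>d\<in>{d. d dvd n}. \<Prod>z\<in>primitive_roots_unity d. [:-z, 1:])"
  proof (rule prod.UNION_disjoint)
    show "finite {d. d dvd n}" using assms by simp
    show "\<forall>d\<in>{d. d dvd n}. finite (primitive_roots_unity d)"
      using divisors_pos finite_primitive_roots_unity by blast
    show "\<forall>i\<in>{d. d dvd n}. \<forall>j\<in>{d. d dvd n}. i \<noteq> j \<longrightarrow>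
        primitive_roots_unity i \<inter> primitive_roots_unity j = {}"
      using divisors_pos disjoint_primitive_roots_unity by blast
  qed
  also have "\<dots> = (\<Prod>d\<in>{d. d dvd n}. cyclotomic_poly d)"
    using divisors_pos by (simp add: cyclotomic_poly_eq_prod_primitive_roots_unity)
  finally show ?thesis .
qed

definition int_poly :: "complex poly \<Rightarrow> bool" where
  "int_poly p \<longleftrightarrow> (\<forall>i. coeff p i \<in> \<int>)"

lemma int_poly_1: "int_poly 1"
  by (simp add: int_poly_def coeff_1)

lemma int_poly_monom: "c \<in> \<int> \<Longrightarrow> int_poly (monom c k)"
  by (simp add: int_poly_def)

lemma int_poly_add: "int_poly p \<Longrightarrow> int_poly q \<Longrightarrow> int_poly (p + q)"
  by (simp add: int_poly_def)

lemma int_poly_diff: "int_poly p \<Longrightarrow> int_poly q \<Longrightarrow> int_poly (p - q)"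
  by (simp add: int_poly_def)

lemma int_poly_mult: "int_poly p \<Longrightarrow> int_poly q \<Longrightarrow> int_poly (p * q)"
  unfolding int_poly_def coeff_mult by (auto intro!: Ints_sum Ints_mult)

lemma int_poly_prod: "(\<And>x. x \<in> A \<Longrightarrow> int_poly (f x)) \<Longrightarrow> int_poly (\<Prod>x\<in>A. f x)"
  by (induction A rule: infinite_finite_induct) (auto intro: int_poly_mult int_poly_1)

lemma poly_in_Ints: "int_poly p \<Longrightarrow> c \<in> \<int> \<Longrightarrow> poly p c \<in> \<int>"
  unfolding poly_altdef int_poly_def by (auto intro!: Ints_sum Ints_mult Ints_power)

lemma int_poly_quotient_monic:
  assumes "P = F * Q" "int_poly P" "int_poly Q" "lead_coeff Q = 1"
  shows "int_poly F"
  using assms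
proof (induction "degree F" arbitrary: F P rule: less_induct)
  case (less F P)
  show ?case
  proof (cases "F = 0")
    case True
    then show ?thesis by (simp add: int_poly_def)
  next
    case False
    define F' where "F' = F - monom (lead_coeff F) (degree F)"
    have "lead_coeff F = lead_coeff P"
      using less.prems(1,4) by (simp add: lead_coeff_mult)
    then have lc: "lead_coeff F \<in> \<int>" using less.prems(2) by (simp add: int_poly_def)
    have "int_poly F'"
    proof (cases "F' = 0")
      case True
      then show ?thesis by (simp add: int_poly_def)
    next
      case False
      have high: "coeff F' i = 0" if "i \<ge> degree F" for i
        using that by (auto simp: F'_def coeff_eq_0)
      have "degree F' \<le> degree F" by (rule degree_le) (use high in auto)
      moreover have "degree F' \<noteq> degree F" using high[OF order.refl] False by (metis leading_coeff_0_iff)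
      ultimately have "degree F' < degree F" by simp
      moreover have "P - monom (lead_coeff F) (degree F) * Q = F' * Q"
        using less.prems(1) by (simp add: F'_def algebra_simps)
      moreover have "int_poly (P - monom (lead_coeff F) (degree F) * Q)"
        using less.prems(2,3) lc by (intro int_poly_diff int_poly_mult int_poly_monom)
      ultimately show ?thesis using less.hyps less.prems(3,4) by blast
    qed
    then have "int_poly (F' + monom (lead_coeff F) (degree F))"
      using lc by (intro int_poly_add int_poly_monom)
    then show ?thesis by (simp add: F'_def)
  qed
qed

lemma int_poly_cyclotomic_poly: "int_poly (cyclotomic_poly n)"
proof (induction n rule: less_induct)
  case (less n)
  show ?case
  proof (cases "n = 0")
    case True
    then show ?thesis by (simp add: cyclotomic_poly_def int_poly_1)
  next
    case False
    then have n: "n > 0" by simp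
    define Q where "Q = (\<Prod>d\<in>{d. d dvd n} - {n}. cyclotomic_poly d)"
    have "monom 1 n - 1 = cyclotomic_poly n * Q"
      unfolding monom_minus_1_eq_prod_cyclotomic_poly[OF n] Q_def
      using False by (subst prod.remove[of _ n]) auto
    moreover have "int_poly (monom 1 n - 1)"
      by (intro int_poly_diff int_poly_monom int_poly_1) simp
    moreover have "int_poly Q"
      unfolding Q_def using False
      by (intro int_poly_prod less.IH) (auto intro: dvd_imp_le nat_less_le)
    moreover have "lead_coeff Q = 1"
      by (simp add: Q_def lead_coeff_prod lead_coeff_cyclotomic_poly)
    ultimately show ?thesis by (rule int_poly_quotient_monic)
  qed
qed

lemma norm_poly_cyclotomic_poly_ge_1:
  assumes "c \<in> \<int>" "poly (cyclotomic_poly n) c \<noteq> 0"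
  shows "norm (poly (cyclotomic_poly n) c) \<ge> 1"
proof -
  obtain k :: int where "poly (cyclotomic_poly n) c = of_int k"
    using poly_in_Ints[OF int_poly_cyclotomic_poly[of n] assms(1)] by (elim Ints_cases)
  with assms(2) show ?thesis by simp
qed

lemma prod_norm_sub_primitive_roots_unity_ge_1:
  assumes "n \<ge> 3" "s \<in> {1, -1}"
  shows "(\<Prod>z\<in>primitive_roots_unity n. norm (s - z)) \<ge> 1"
proof -
  have n: "n > 0" using assms(1) by simp
  have "s \<notin> primitive_roots_unity n"
    using assms one_notin_primitive_roots_unity minus_one_notin_primitive_roots_unity by auto
  then have "poly (cyclotomic_poly n) s \<noteq> 0"
    by (simp add: poly_cyclotomic_poly[OF n] finite_primitive_roots_unity[OF n])
  moreover have "s \<in> \<int>" using assms(2) by auto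
  ultimately have "norm (poly (cyclotomic_poly n) s) \<ge> 1"
    using norm_poly_cyclotomic_poly_ge_1 by blast
  then show ?thesis by (simp add: poly_cyclotomic_poly[OF n] prod_norm)
qed

lemma cyclotomic_form_eq_prod:
  assumes "n > 0"
  shows "cyclotomic_form n x y = (\<Prod>z\<in>primitive_roots_unity n. x - z * y)"
proof (cases "y = 0")
  case True
  have "cyclotomic_form n x y = (\<Sum>i\<le>totient n. if i = totient n then x ^ totient n else 0)"
    unfolding cyclotomic_form_def using True lead_coeff_cyclotomic_poly[of n] degree_cyclotomic_poly[of n]
    by (intro sum.cong) auto
  then show ?thesis using True by (simp add: card_primitive_roots_unity[OF assms])
next
  case False
  have "cyclotomic_form n x y = (\<Sum>i\<le>totient n. y ^ totient n * (coeff (cyclotomic_poly n) i * (x / y) ^ i))"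
    unfolding cyclotomic_form_def
  proof (intro sum.cong refl)
    fix i assume "i \<in> {..totient n}"
    then have "y ^ totient n = y ^ i * y ^ (totient n - i)" by (simp flip: power_add)
    then show "coeff (cyclotomic_poly n) i * x ^ i * y ^ (totient n - i)
        = y ^ totient n * (coeff (cyclotomic_poly n) i * (x / y) ^ i)"
      using False by (simp add: power_divide field_simps)
  qed
  also have "\<dots> = y ^ totient n * poly (cyclotomic_poly n) (x / y)"
    by (simp add: poly_altdef degree_cyclotomic_poly sum_distrib_left)
  also have "\<dots> = (\<Prod>z\<in>primitive_roots_unity n. y * (x / y - z))"
    by (simp add: poly_cyclotomic_poly[OF assms] card_primitive_roots_unity[OF assms] prod.distrib)
  also have "\<dots> = (\<Prod>z\<in>primitive_roots_unity n. x - z * y)"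
    using False by (intro prod.cong refl) (simp add: field_simps)
  finally show ?thesis .
qed

text \<open>Weighted AM-GM \<open>(a + b) u powr t \<le> a + b u\<close> with \<open>t = b / (a + b)\<close>, multiplied over \<open>A\<close>.\<close>

lemma prod_add_mult_ge_power:
  fixes a b :: real and u :: "'a \<Rightarrow> real"
  assumes "a \<ge> 0" "b \<ge> 0" "\<And>k. k \<in> A \<Longrightarrow> u k > 0" "(\<Prod>k\<in>A. u k) \<ge> 1"
  shows "(a + b) ^ card A \<le> (\<Prod>k\<in>A. a + b * u k)"
proof (cases "b = 0")
  case True
  then show ?thesis by simp
next
  case False
  define t where "t = b / (a + b)"
  have ab: "a + b > 0" using assms(1,2) False by simp
  have factor: "(a + b) * u k powr t \<le> a + b * u k" if "k \<in> A" for k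
  proof -
    have "a / (a + b) + t = 1" using ab by (simp add: t_def flip: add_divide_distrib)
    then have "u k powr t \<le> a / (a + b) + t * u k"
      using Youngs_inequality_0[of "a / (a + b)" t 1 "u k"] assms(1,2) assms(3)[OF that] ab
      by (simp add: t_def)
    also have "\<dots> = (a + b * u k) / (a + b)" by (simp add: t_def add_divide_distrib)
    finally show ?thesis using ab by (simp add: pos_le_divide_eq mult.commute)
  qed
  have "1 \<le> (\<Prod>k\<in>A. u k) powr t"
    using assms(2,4) ab by (intro ge_one_powr_ge_zero) (simp_all add: t_def)
  then have "(a + b) ^ card A \<le> (a + b) ^ card A * (\<Prod>k\<in>A. u k) powr t"
    using ab by (simp add: mult_le_cancel_left1)
  also have "\<dots> = (\<Prod>k\<in>A. (a + b) * u k powr t)"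
    by (simp add: prod_powr_distrib prod.distrib)
  also have "\<dots> \<le> (\<Prod>k\<in>A. a + b * u k)"
    using factor ab by (intro prod_mono) auto
  finally show ?thesis .
qed

lemma norm_of_real_sub_mult_sq:
  fixes x y s :: real and z :: complex
  assumes "norm z = 1" "s ^ 2 = 1"
  shows "norm (of_real x - z * of_real y) ^ 2 = (x - s * y) ^ 2 + s * x * y * norm (of_real s - z) ^ 2"
proof -
  have "(Re z) ^ 2 + (Im z) ^ 2 = 1" using assms(1) cmod_power2[of z] by simp
  with assms(2) show ?thesis unfolding cmod_power2 by simp algebra
qed

lemma max_abs_sq_le:
  fixes x y :: real
  shows "3 / 4 * (max \<bar>x\<bar> \<bar>y\<bar>) ^ 2 \<le> x ^ 2 - \<bar>x * y\<bar> + y ^ 2"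
proof -
  have "0 \<le> (\<bar>x\<bar> / 2 - \<bar>y\<bar>) ^ 2" "0 \<le> (\<bar>y\<bar> / 2 - \<bar>x\<bar>) ^ 2" by simp_all
  then show ?thesis
    by (auto simp: max_def abs_mult power2_eq_square algebra_simps)
qed

lemma cyclotomic_form_norm_sq_ge:
  fixes x y :: real
  assumes "n \<ge> 3"
  shows "(x ^ 2 - \<bar>x * y\<bar> + y ^ 2) ^ totient n \<le> norm (cyclotomic_form n (of_real x) (of_real y)) ^ 2"
proof -
  have n: "n > 0" using assms by simp
  define s :: real where "s = (if x * y \<ge> 0 then 1 else -1)"
  have s: "s ^ 2 = 1" "s * x * y = \<bar>x * y\<bar>" "(x - s * y) ^ 2 + \<bar>x * y\<bar> = x ^ 2 - \<bar>x * y\<bar> + y ^ 2"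
    by (auto simp: s_def power2_eq_square algebra_simps)
  have s_not_root: "of_real s - z \<noteq> 0" if "z \<in> primitive_roots_unity n" for z
    using that assms one_notin_primitive_roots_unity minus_one_notin_primitive_roots_unity
    by (auto simp: s_def)
  have "(\<Prod>z\<in>primitive_roots_unity n. norm (of_real s - z) ^ 2)
      = (\<Prod>z\<in>primitive_roots_unity n. norm (of_real s - z)) ^ 2"
    by (simp add: prod_power_distrib)
  also have "\<dots> \<ge> 1"
    using prod_norm_sub_primitive_roots_unity_ge_1[OF assms, of "of_real s"]
    by (simp add: s_def one_le_power split: if_splits)
  finally have prod_ge_1: "(\<Prod>z\<in>primitive_roots_unity n. norm (of_real s - z) ^ 2) \<ge> 1" .
  have "norm (cyclotomic_form n (of_real x) (of_real y)) ^ 2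
      = (\<Prod>z\<in>primitive_roots_unity n. norm (of_real x - z * of_real y) ^ 2)"
    by (simp add: cyclotomic_form_eq_prod[OF n] prod_power_distrib flip: prod_norm)
  also have "\<dots> = (\<Prod>z\<in>primitive_roots_unity n. (x - s * y) ^ 2 + \<bar>x * y\<bar> * norm (of_real s - z) ^ 2)"
    using norm_of_real_sub_mult_sq[OF norm_primitive_root_unity[OF n] s(1)] s(2)
    by (intro prod.cong) auto
  also have "\<dots> \<ge> ((x - s * y) ^ 2 + \<bar>x * y\<bar>) ^ card (primitive_roots_unity n)"
    using s_not_root prod_ge_1 by (intro prod_add_mult_ge_power) auto
  finally show ?thesis by (simp add: s(3) card_primitive_roots_unity[OF n])
qed

lemma power_ge_sqrt_3_bounds:
  fixes c m :: real
  assumes cN: "c ^ N \<le> m" and c: "sqrt 3 \<le> c" and N: "N \<ge> 2"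
  shows "real N \<le> 2 / ln 3 * ln m" "c \<le> m powr (1 / N)" "3 \<le> m"
proof -
  have c_pos: "c > 0" using c by (simp add: less_le_trans[OF _ c])
  have "3 = sqrt 3 ^ 2" by simp
  also have "\<dots> \<le> sqrt 3 ^ N" using N by (intro power_increasing) auto
  also have sqrt_3_le: "\<dots> \<le> m" using power_mono[OF c, of N] cN by simp
  finally show m: "3 \<le> m" .
  have "N * ln 3 = 2 * ln (sqrt 3 ^ N)" by (simp add: ln_realpow ln_sqrt)
  also have "\<dots> \<le> 2 * ln m" using sqrt_3_le m by (intro mult_left_mono ln_mono) auto
  finally show "real N \<le> 2 / ln 3 * ln m" by (simp add: field_simps)
  have "c = (c ^ N) powr (1 / N)"
    using c_pos N by (simp add: powr_realpow[symmetric] powr_powr)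
  also have "\<dots> \<le> m powr (1 / N)"
    using cN c_pos by (intro powr_mono2) auto
  finally show "c \<le> m powr (1 / N)" .
qed

theorem theorem1p1:
  fixes m x y :: int and n :: nat
  assumes "m > 0" and "n \<ge> 3" and "max \<bar>x\<bar> \<bar>y\<bar> \<ge> 2"
    and "cyclotomic_form n (of_int x) (of_int y) = of_int m"
  shows "real (totient n) \<le> 2 / ln 3 * ln (real_of_int m)
    \<and> real_of_int (max \<bar>x\<bar> \<bar>y\<bar>) \<le> 2 / sqrt 3 * (real_of_int m) powr (1 / real (totient n))
    \<and> m \<notin> {1, 2}"
proof -
  define N where "N = totient n"
  define c where "c = sqrt 3 / 2 * real_of_int (max \<bar>x\<bar> \<bar>y\<bar>)"
  have "even N" "N > 0" using totient_even[of n] assms(2) by (auto simp: N_def)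
  then have N: "N \<ge> 2" by presburger
  have c: "sqrt 3 \<le> c" using assms(3) by (simp add: c_def)
  have c_sq: "c ^ 2 = 3 / 4 * (max \<bar>real_of_int x\<bar> \<bar>real_of_int y\<bar>) ^ 2"
    by (simp add: c_def power_mult_distrib power_divide)
  have "(c ^ 2) ^ N \<le> ((real_of_int x) ^ 2 - \<bar>real_of_int x * real_of_int y\<bar> + (real_of_int y) ^ 2) ^ N"
    using max_abs_sq_le[of "real_of_int x" "real_of_int y"] c_sq by (intro power_mono) simp_all
  also have "\<dots> \<le> (real_of_int m) ^ 2"
    using cyclotomic_form_norm_sq_ge[OF assms(2), of "real_of_int x" "real_of_int y"] assms(1,4)
    by (simp add: N_def)
  finally have "(c ^ N) ^ 2 \<le> (real_of_int m) ^ 2" by (simp flip: power_mult add: mult.commute)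
  then have "c ^ N \<le> real_of_int m" by (rule power2_le_imp_le) (use assms(1) in simp)
  from power_ge_sqrt_3_bounds[OF this c N] show ?thesis
    by (auto simp: N_def c_def field_simps)
qed

end
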